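(* Fix $k, n \in \mathbb{N}$. For $i \in \{0, \ldots, n\}$ let $$P_{k,n,i} = \left\{ x \in \Delta(n+1, k(n+1)) : \sum_{s=1}^{kt} x_{ki+s} \leq t, \quad t = 1, \ldots, n \right\},$$ where indices of coordinates are taken modulo $k(n+1)$ (with representatives in $\{1,\ldots,k(n+1)\}$). Then for $i \neq j$ the interiors of $P_{k,n,i}$ and $P_{k,n,j}$ are disjoint, and $\Delta(n+1, k(n+1)) = \bigcup_{i=0}^{n} P_{k,n,i}$.
   Context: The hypersimplex is $\Delta(k,n) = \{ (x_1,\ldots,x_n) \in [0,1]^n : \sum_{i=1}^n x_i = k\}$. Interiors are taken relative to the affine hull of the hypersimplex. *)

theory Defs
  imports "HOL-Analysis.Analysis"
begin

definition hypersimplex :: "nat \<Rightarrow> (real^'d::finite) set" where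
  "hypersimplex r = {x. (\<forall>i. 0 \<le> x $ i \<and> x $ i \<le> 1) \<and> (\<Sum>i\<in>UNIV. x $ i) = real r}"

text \<open>Coordinate number m (m >= 1) of x, where coordinates are numbered 1..N via the
  bijection e : {1..N} -> 'd and indices are read modulo N with representatives in {1..N}.\<close>
definition coord_mod :: "(nat \<Rightarrow> 'd) \<Rightarrow> nat \<Rightarrow> real^'d \<Rightarrow> nat \<Rightarrow> real" where
  "coord_mod e N x m = x $ e ((m - 1) mod N + 1)"

definition Pkni :: "(nat \<Rightarrow> 'd::finite) \<Rightarrow> nat \<Rightarrow> nat \<Rightarrow> nat \<Rightarrow> (real^'d) set" where
  "Pkni e k n i = {x \<in> hypersimplex (n+1).
      \<forall>t\<in>{1..n}. (\<Sum>s=1..k*t. coord_mod e (k*(n+1)) x (k*i+s)) \<le> real t}"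

end

theory Submission
  imports Defs
begin

text \<open>
  Let F(M) be the sum of the first M coordinates, read cyclically, and let h(m) = F(k m) - m.
  On the hypersimplex h is (n+1)-periodic, and x lies in P_i exactly when h attains its maximum at i.
  Hence a maximiser of h over {0..n} gives the covering. If x were in the relative interior of P_i
  and also in P_j with i < j, then h(i) = h(j) would both be maximal; moving x inside the affine hull
  along e_a - e_b, where a is coordinate k i + 1 and b is coordinate k j + 1, raises h(j) - h(i)
  and pushes the perturbed point out of P_i. Such a move stays in the affine hull because k \<ge> 2
  leaves room for two vertices of the hypersimplex that differ exactly in a and b.
\<close>

lemma coord_mod_add_period:
  assumes "1 \<le> m" "0 < N"
  shows "coord_mod e N x (m + N) = coord_mod e N x m"
proof -
  have "m + N - 1 = (m - 1) + N" using assms by simp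
  then show ?thesis unfolding coord_mod_def by simp
qed

definition prefix_sum :: "(nat \<Rightarrow> 'd::finite) \<Rightarrow> nat \<Rightarrow> real^'d \<Rightarrow> nat \<Rightarrow> real" where
  "prefix_sum e N x M = (\<Sum>s=1..M. coord_mod e N x s)"

lemma prefix_sum_0 [simp]: "prefix_sum e N x 0 = 0"
  unfolding prefix_sum_def by simp

lemma prefix_sum_Suc: "prefix_sum e N x (Suc M) = prefix_sum e N x M + coord_mod e N x (Suc M)"
  unfolding prefix_sum_def by simp

lemma prefix_sum_add_scaleR:
  "prefix_sum e N (x + d *\<^sub>R v) M = prefix_sum e N x M + d * prefix_sum e N v M"
  unfolding prefix_sum_def coord_mod_def by (simp add: sum.distrib sum_distrib_left)

lemma prefix_sum_diff: "prefix_sum e N (x - y) M = prefix_sum e N x M - prefix_sum e N y M"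
  unfolding prefix_sum_def coord_mod_def by (simp add: sum_subtractf)

lemma sum_coord_mod_window:
  "(\<Sum>s=1..L. coord_mod e N x (a + s)) = prefix_sum e N x (a + L) - prefix_sum e N x a"
  by (induction L) (simp_all add: prefix_sum_Suc)

lemma prefix_sum_add_period:
  assumes "0 < N"
  shows "prefix_sum e N x (M + N) = prefix_sum e N x M + prefix_sum e N x N"
proof (induction M)
  case (Suc M)
  have "coord_mod e N x (Suc M + N) = coord_mod e N x (Suc M)"
    using coord_mod_add_period[of "Suc M" N] assms by simp
  then show ?case using Suc prefix_sum_Suc[of e N x "M + N"] prefix_sum_Suc[of e N x M] by simp
qed simp

lemma prefix_sum_below_period:
  assumes "M \<le> N"
  shows "prefix_sum e N x M = (\<Sum>s=1..M. x $ e s)"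
  unfolding prefix_sum_def coord_mod_def
proof (rule sum.cong)
  fix s assume "s \<in> {1..M}"
  then have "(s - 1) mod N + 1 = s" using assms by auto
  then show "x $ e ((s - 1) mod N + 1) = x $ e s" by simp
qed simp

lemma prefix_sum_period:
  assumes "bij_betw e {1..N} (UNIV :: 'd::finite set)"
  shows "prefix_sum e N x N = (\<Sum>i\<in>UNIV. x $ i)"
  using prefix_sum_below_period[of N N e x] sum.reindex_bij_betw[OF assms, of "\<lambda>i. x $ i"] by simp

lemma prefix_sum_axis:
  assumes "inj_on e {1..N}" "p \<in> {1..N}" "M \<le> N"
  shows "prefix_sum e N (axis (e p) 1) M = (if p \<le> M then 1 else 0)"
proof -
  have "prefix_sum e N (axis (e p) 1) M = (\<Sum>s=1..M. axis (e p) 1 $ e s)"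
    by (rule prefix_sum_below_period[OF assms(3)])
  also have "\<dots> = (\<Sum>s=1..M. if s = p then 1 else 0)"
  proof (rule sum.cong)
    fix s assume "s \<in> {1..M}"
    then have "e s = e p \<longleftrightarrow> s = p" using assms inj_on_eq_iff[OF assms(1)] by auto
    then show "axis (e p) 1 $ e s = (if s = p then 1 else 0)" by (simp add: axis_def)
  qed simp
  also have "\<dots> = (if p \<le> M then 1 else 0)" using assms(2) by simp
  finally show ?thesis .
qed

definition excess :: "(nat \<Rightarrow> 'd::finite) \<Rightarrow> nat \<Rightarrow> nat \<Rightarrow> real^'d \<Rightarrow> nat \<Rightarrow> real" where
  "excess e k n x m = prefix_sum e (k*(n+1)) x (k*m) - real m"

lemma Pkni_iff_excess:
  "x \<in> Pkni e k n i \<longleftrightarrow>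
     x \<in> hypersimplex (n+1) \<and> (\<forall>t\<in>{1..n}. excess e k n x (i + t) \<le> excess e k n x i)"
proof -
  have "(\<Sum>s=1..k*t. coord_mod e (k*(n+1)) x (k*i + s))
        = prefix_sum e (k*(n+1)) x (k*(i + t)) - prefix_sum e (k*(n+1)) x (k*i)" for t
    using sum_coord_mod_window[of e "k*(n+1)" x "k*i" "k*t"] by (simp add: add_mult_distrib2)
  then show ?thesis unfolding Pkni_def excess_def by auto
qed

lemma excess_add_period:
  assumes "bij_betw e {1..k*(n+1)} (UNIV :: 'd::finite set)" "0 < k" "x \<in> hypersimplex (n+1)"
  shows "excess e k n x (m + (n+1)) = excess e k n x m"
proof -
  have "prefix_sum e (k*(n+1)) x (k*(n+1)) = real (n+1)"
    using prefix_sum_period[OF assms(1)] assms(3) unfolding hypersimplex_def by simp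
  moreover have "k*(m + (n+1)) = k*m + k*(n+1)" by (simp add: add_mult_distrib2)
  ultimately show ?thesis
    using prefix_sum_add_period[of "k*(n+1)" e x "k*m"] assms(2) unfolding excess_def
    by (simp only:) simp
qed

lemma excess_mod:
  assumes "bij_betw e {1..k*(n+1)} (UNIV :: 'd::finite set)" "0 < k" "x \<in> hypersimplex (n+1)"
  shows "excess e k n x m = excess e k n x (m mod (n+1))"
proof -
  have "excess e k n x (r + q*(n+1)) = excess e k n x r" for q r
  proof (induction q)
    case (Suc q)
    have "r + Suc q * (n+1) = (r + q*(n+1)) + (n+1)" by simp
    then show ?case using Suc excess_add_period[OF assms] by presburger
  qed simp
  then show ?thesis by (metis mod_div_mult_eq)
qed

lemma Pkni_iff_excess_max:
  assumes "bij_betw e {1..k*(n+1)} (UNIV :: 'd::finite set)" "0 < k"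
    and "x \<in> hypersimplex (n+1)" "i \<le> n"
  shows "x \<in> Pkni e k n i \<longleftrightarrow> (\<forall>m. excess e k n x m \<le> excess e k n x i)"
proof
  assume P: "x \<in> Pkni e k n i"
  show "\<forall>m. excess e k n x m \<le> excess e k n x i"
  proof
    fix m
    define r where "r = m mod (n+1)"
    have "r \<le> n" unfolding r_def by auto
    have "excess e k n x r \<le> excess e k n x i"
    proof (cases "i \<le> r")
      case True
      then have "r = i \<or> r - i \<in> {1..n}" using \<open>r \<le> n\<close> by auto
      then show ?thesis using P True unfolding Pkni_iff_excess by (metis le_add_diff_inverse order_refl)
    next
      case False
      then have "r + (n+1) - i \<in> {1..n}" using assms(4) by auto
      then have "excess e k n x (i + (r + (n+1) - i)) \<le> excess e k n x i"
        using P unfolding Pkni_iff_excess by blast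
      then show ?thesis using assms(4) excess_add_period[OF assms(1-3), of r] by simp
    qed
    then show "excess e k n x m \<le> excess e k n x i"
      using excess_mod[OF assms(1-3)] unfolding r_def by metis
  qed
qed (use assms(3) in \<open>auto simp: Pkni_iff_excess\<close>)

lemma hypersimplex_covered_by_Pkni:
  assumes "bij_betw e {1..k*(n+1)} (UNIV :: 'd::finite set)" "0 < k" "x \<in> hypersimplex (n+1)"
  shows "\<exists>i\<le>n. x \<in> Pkni e k n i"
proof -
  let ?h = "excess e k n x"
  have "Max (?h ` {..n}) \<in> ?h ` {..n}" by (rule Max_in) auto
  then obtain i where i: "i \<le> n" "?h i = Max (?h ` {..n})" by (metis atMost_iff imageE)
  have "?h m \<le> ?h i" for m
    using excess_mod[OF assms, of m] Max_ge[of "?h ` {..n}" "?h (m mod (n+1))"] i by auto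
  then show ?thesis using i Pkni_iff_excess_max[OF assms] by blast
qed

lemma relative_interior_of_move:
  fixes x :: "'a::real_normed_vector"
  assumes "x \<in> (top_of_set (affine hull H)) interior_of S" "p \<in> H" "q \<in> H"
  shows "\<exists>d>0. x + d *\<^sub>R (p - q) \<in> S"
proof -
  obtain T where T: "openin (top_of_set (affine hull H)) T" "x \<in> T" "T \<subseteq> S"
    using assms(1) unfolding interior_of_def by blast
  then obtain \<epsilon> where \<epsilon>: "0 < \<epsilon>" "cball x \<epsilon> \<inter> affine hull H \<subseteq> T"
    unfolding openin_contains_cball by blast
  define d where "d = \<epsilon> / (norm (p - q) + 1)"
  have "norm (p - q) + 1 > 0" by (simp add: add_nonneg_pos)
  then have "d > 0" unfolding d_def using \<epsilon>(1) by simp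
  have "d * norm (p - q) \<le> d * (norm (p - q) + 1)" using \<open>d > 0\<close> by simp
  also have "\<dots> = \<epsilon>" unfolding d_def using \<open>norm (p - q) + 1 > 0\<close> by simp
  finally have "x + d *\<^sub>R (p - q) \<in> cball x \<epsilon>"
    using \<open>d > 0\<close> by (simp add: dist_norm)
  moreover have "x + d *\<^sub>R (p - q) \<in> affine hull H"
    using T openin_imp_subset assms(2,3)
    by (blast intro: mem_affine_3_minus affine_affine_hull hull_inc)
  ultimately show ?thesis using \<epsilon>(2) T(3) \<open>d > 0\<close> by blast
qed

lemma indicator_vec_in_hypersimplex:
  "card S = r \<Longrightarrow> ((\<chi> l. if l \<in> S then 1 else 0) :: real^'d::finite) \<in> hypersimplex r"
  unfolding hypersimplex_def by (simp add: sum.If_cases)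

lemma hypersimplex_axis_diff:
  fixes a b :: "'d::finite"
  assumes "a \<noteq> b" "r + 2 \<le> CARD('d)"
  shows "\<exists>p\<in>hypersimplex (r+1). \<exists>q\<in>hypersimplex (r+1). p - q = axis a 1 - axis b 1"
proof -
  have "card (UNIV - {a, b}) = CARD('d) - 2" using assms(1) by (simp add: card_Diff_subset)
  then obtain R where R: "R \<subseteq> UNIV - {a, b}" "card R = r"
    using assms(2) by (metis obtain_subset_with_card_n add_le_imp_le_diff)
  then have "finite R" "a \<notin> R" "b \<notin> R" by auto
  define p where "p = ((\<chi> l. if l \<in> insert a R then 1 else 0) :: real^'d)"
  define q where "q = ((\<chi> l. if l \<in> insert b R then 1 else 0) :: real^'d)"
  have "card (insert a R) = r + 1" "card (insert b R) = r + 1"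
    using R(2) \<open>finite R\<close> \<open>a \<notin> R\<close> \<open>b \<notin> R\<close> by simp_all
  then have "p \<in> hypersimplex (r+1)" "q \<in> hypersimplex (r+1)"
    unfolding p_def q_def by (simp_all only: indicator_vec_in_hypersimplex)
  moreover have "(p - q) $ l = (axis a 1 - axis b 1) $ l" for l
    unfolding p_def q_def axis_def using assms(1) \<open>a \<notin> R\<close> \<open>b \<notin> R\<close> by simp
  then have "p - q = axis a 1 - axis b 1" by (simp add: vec_eq_iff)
  ultimately show ?thesis by blast
qed

lemma relative_interior_Pkni_disjoint_Pkni:
  fixes e :: "nat \<Rightarrow> 'd::finite"
  assumes e: "bij_betw e {1..k*(n+1)} (UNIV :: 'd set)" and k: "k \<ge> 2"
    and ij: "i < j" "j \<le> n"
    and xi: "x \<in> (top_of_set (affine hull (hypersimplex (n+1) :: (real^'d) set))) interior_of Pkni e k n i"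
    and xj: "x \<in> Pkni e k n j"
  shows False
proof -
  let ?N = "k*(n+1)" and ?h = "excess e k n"
  have "0 < k" "i \<le> n" using k ij by simp_all
  note excess_max = Pkni_iff_excess_max[OF e \<open>0 < k\<close>]
  have "x \<in> Pkni e k n i" using xi interior_of_subset by (rule subsetD[rotated])
  then have x: "x \<in> hypersimplex (n+1)" unfolding Pkni_def by blast
  have hx: "?h x i = ?h x j"
    using excess_max[OF x \<open>i \<le> n\<close>] excess_max[OF x ij(2)] \<open>x \<in> Pkni e k n i\<close> xj
    by (meson order.antisym)
  have inj: "inj_on e {1..?N}" using e bij_betw_imp_inj_on by blast
  have "k*i + k \<le> k*j" using ij mult_le_mono2[of "i+1" j k] by simp
  moreover have "k*j \<le> k*n" using ij by simp
  moreover have "?N = k*n + k" by simp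
  ultimately have pos: "k*i + 1 \<in> {1..?N}" "k*j + 1 \<in> {1..?N}" "k*i + 1 \<le> k*j" "k*j \<le> ?N"
    using k by (simp_all only: atLeastAtMost_iff) linarith+
  define a where "a = e (k*i + 1)"
  define b where "b = e (k*j + 1)"
  have "a \<noteq> b" unfolding a_def b_def using inj_onD[OF inj _ pos(1,2)] pos(3) by fastforce
  moreover have "n + 2 \<le> CARD('d)"
    using bij_betw_same_card[OF e] mult_le_mono1[OF k, of "n+1"] by simp
  ultimately obtain p q where pq: "p \<in> hypersimplex (n+1)" "q \<in> hypersimplex (n+1)"
    and v: "p - q = axis a 1 - axis b 1"
    using hypersimplex_axis_diff by blast
  obtain d where "d > 0" and y: "x + d *\<^sub>R (p - q) \<in> Pkni e k n i"
    using relative_interior_of_move[OF xi pq] by blast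
  then have "?h (x + d *\<^sub>R (p - q)) j \<le> ?h (x + d *\<^sub>R (p - q)) i"
    using excess_max[OF _ \<open>i \<le> n\<close>] unfolding Pkni_def by blast
  moreover have "prefix_sum e ?N (p - q) (k*j) - prefix_sum e ?N (p - q) (k*i) = 1"
  proof -
    have "k*i \<le> ?N" using pos(3,4) by linarith
    then show ?thesis
      using prefix_sum_axis[OF inj pos(1) pos(4)] prefix_sum_axis[OF inj pos(2) pos(4)]
        prefix_sum_axis[OF inj pos(1)] prefix_sum_axis[OF inj pos(2)] pos(3)
      unfolding v a_def b_def prefix_sum_diff by simp
  qed
  ultimately show False
    using hx \<open>d > 0\<close> unfolding excess_def prefix_sum_add_scaleR by (simp add: algebra_simps)
qed

theorem mainTheorem2:
  fixes k n :: nat and e :: "nat \<Rightarrow> 'd::finite"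
  assumes e: "bij_betw e {1..k*(n+1)} (UNIV :: 'd set)"
    and k: "k \<ge> 2"
  shows "(\<forall>i\<le>n. \<forall>j\<le>n. i \<noteq> j \<longrightarrow>
            ((top_of_set (affine hull (hypersimplex (n+1) :: (real^'d) set))) interior_of Pkni e k n i)
          \<inter> ((top_of_set (affine hull (hypersimplex (n+1) :: (real^'d) set))) interior_of Pkni e k n j)
          = {})
      \<and> (hypersimplex (n+1) :: (real^'d) set) = (\<Union>i\<le>n. Pkni e k n i)"
proof (intro conjI allI impI)
  let ?I = "\<lambda>i. (top_of_set (affine hull (hypersimplex (n+1) :: (real^'d) set))) interior_of Pkni e k n i"
  have "?I i \<inter> ?I j = {}" if "i < j" "j \<le> n" for i j
    using relative_interior_Pkni_disjoint_Pkni[OF e k that]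
      interior_of_subset[of "top_of_set (affine hull hypersimplex (n+1))" "Pkni e k n j"] by blast
  then show "?I i \<inter> ?I j = {}" if "i \<le> n" "j \<le> n" "i \<noteq> j" for i j
    using that by (metis inf_commute linorder_neqE_nat)
  have "0 < k" using k by simp
  then have "hypersimplex (n+1) \<subseteq> (\<Union>i\<le>n. Pkni e k n i)"
    using hypersimplex_covered_by_Pkni[OF e] by blast
  moreover have "(\<Union>i\<le>n. Pkni e k n i) \<subseteq> hypersimplex (n+1)" unfolding Pkni_def by blast
  ultimately show "hypersimplex (n+1) = (\<Union>i\<le>n. Pkni e k n i)" by (rule order.antisym)
qed

end
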